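(* Let $\mathcal{M}$ be a separable metric space, let $f:\mathcal{M}\to\mathcal{M}$ be a continuous bijection with continuous inverse, and let $\mathcal{X}\subseteq\mathcal{M}$ be forward invariant under $f$ and path connected. Consider $x_{k+1}=f(x_k)$ on $\mathcal{X}$, with set of $\omega$-limit sets $\mathcal{W}$ and set of $\alpha$-limit sets $\mathcal{A}$. Suppose: every trajectory in $\mathcal{X}$ is forward precompact or backward precompact in $\mathcal{X}$; $\mathcal{W}\cup\mathcal{A}$ is countable; for every $\Omega\in\mathcal{W}$ there is a trajectory forward precompact in $\mathcal{X}$ starting in $D^+_{\mathcal{X}}(\Omega)$, and for every $\Gamma\in\mathcal{A}$ a trajectory backward precompact in $\mathcal{X}$ starting in $D^-_{\mathcal{X}}(\Gamma)$. If $\mathcal{W}\cup\mathcal{A}$ has more than one element, then there do not exist a separable metric space $\mathcal{Z}$, a continuous bijection $g:\mathcal{Z}\to\mathcal{Z}$ with continuous inverse such that $z_{k+1}=g(z_k)$ and its time reversal $z_{k+1}=g^{-1}(z_k)$ both have closed basins (e.g., an invertible linear system), and a continuous one-to-one map $F:\mathcal{X}\to\mathcal{Z}$ with $F\circ f=g\circ F$ on $\mathcal{X}$.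
   Context: Forward orbit of $\xi$: $\{f^k(\xi)\mid k\in\mathbb{N}\}$; backward orbit: $\{f^{-k}(\xi)\mid k\in\mathbb{N}\}$. A set $S\subseteq\mathcal{X}$ is precompact if its closure in $\mathcal{X}$ is compact; a trajectory is forward (backward) precompact if its forward (backward) orbit is precompact. $\omega_{\mathcal{X}}(\xi)$ is the set of $x\in\mathcal{X}$ with $f^{k_j}(\xi)\to x$ for some $k_j\to\infty$; $\alpha_{\mathcal{X}}(\xi)$ likewise with $f^{-k_j}$. $\mathcal{W}=\{\omega_{\mathcal{X}}(\xi)\mid\xi\in\mathcal{X}\}$, $\mathcal{A}=\{\alpha_{\mathcal{X}}(\xi)\mid\xi\in\mathcal{X}\}$, $D^+_{\mathcal{X}}(\Omega)=\{\xi\in\mathcal{X}\mid\omega_{\mathcal{X}}(\xi)=\Omega\}$, $D^-_{\mathcal{X}}(\Gamma)=\{\xi\in\mathcal{X}\mid\alpha_{\mathcal{X}}(\xi)=\Gamma\}$. A system has closed basins if the domain of attraction of each of its $\omega$-limit sets is closed (for a time reversal: each domain of repulsion of each $\alpha$-limit set of the original system is closed). Same notions on $\mathcal{Z}$ for $g$. *)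

theory Defs
  imports "HOL-Analysis.Analysis"
begin

text \<open>Discrete-time system x_{k+1} = h x_k considered on a state set S.
  Backward dynamics are obtained by passing the inverse map as h.\<close>

definition orbit :: "('a \<Rightarrow> 'a) \<Rightarrow> 'a \<Rightarrow> 'a set" where
  "orbit h \<xi> = {(h ^^ k) \<xi> | k. True}"

definition precompact_in :: "'a::metric_space set \<Rightarrow> 'a set \<Rightarrow> bool" where
  "precompact_in S T \<longleftrightarrow> T \<subseteq> S \<and> compact (S \<inter> closure T)"

definition limit_set :: "'a::metric_space set \<Rightarrow> ('a \<Rightarrow> 'a) \<Rightarrow> 'a \<Rightarrow> 'a set" where
  "limit_set S h \<xi> = {x \<in> S. \<exists>kk :: nat \<Rightarrow> nat.
      filterlim kk at_top sequentially \<and> (\<lambda>j. (h ^^ kk j) \<xi>) \<longlonglongrightarrow> x}"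

text \<open>Set of all limit sets (the set W for h = f, the set A for h = f^{-1}).\<close>
definition limit_sets :: "'a::metric_space set \<Rightarrow> ('a \<Rightarrow> 'a) \<Rightarrow> 'a set set" where
  "limit_sets S h = limit_set S h ` S"

definition basin :: "'a::metric_space set \<Rightarrow> ('a \<Rightarrow> 'a) \<Rightarrow> 'a set \<Rightarrow> 'a set" where
  "basin S h \<Omega> = {\<xi> \<in> S. limit_set S h \<xi> = \<Omega>}"

definition closed_basins :: "'a::metric_space set \<Rightarrow> ('a \<Rightarrow> 'a) \<Rightarrow> bool" where
  "closed_basins S h \<longleftrightarrow> (\<forall>\<Omega> \<in> limit_sets S h. closedin (top_of_set S) (basin S h \<Omega>))"

end

theory Submission
  imports Defs
begin

(* The maps x \<mapsto> \<omega>(F x) and x \<mapsto> \<alpha>(F x) are constant along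
   trajectories and have closed level sets in X (preimages of closed basins). Every trajectory of
   X accumulates at a point whose orbit is precompact in both time directions; for such a point
   the limit sets of F y are the F-images of its limit sets in X, so both maps take only
   countably many values. A path cannot be split into countably many (at least two) disjoint
   nonempty closed sets (Sierpinski), so both maps are constant on the path-connected set X.
   Injectivity of F then makes all \<omega>-limit sets equal and all \<alpha>-limit sets equal, and since
   \<alpha>(y) \<subseteq> \<omega>(\<xi>) for y \<in> \<omega>(\<xi>) (and symmetrically) the two coincide. *)

lemma orbit_eq_range: "orbit h \<xi> = range (\<lambda>k. (h ^^ k) \<xi>)"
  by (auto simp: orbit_def)

lemma funpow_in_orbit [simp]: "(h ^^ k) \<xi> \<in> orbit h \<xi>"
  by (auto simp: orbit_eq_range)

lemma orbit_start [simp]: "\<xi> \<in> orbit h \<xi>"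
  using funpow_in_orbit[of 0 h \<xi>] by simp

lemma image_orbit_subset: "h ` orbit h \<xi> \<subseteq> orbit h \<xi>"
proof
  fix x assume "x \<in> h ` orbit h \<xi>"
  then obtain k where "x = (h ^^ Suc k) \<xi>" by (auto simp: orbit_eq_range)
  then show "x \<in> orbit h \<xi>" by (simp only: funpow_in_orbit)
qed

lemma homeomorphism_funpow:
  assumes "homeomorphism S S h h'"
  shows "homeomorphism S S (h ^^ n) (h' ^^ n)"
proof (induction n)
  case 0
  show ?case by (simp add: homeomorphism_ident id_def)
next
  case (Suc n)
  then have "homeomorphism S S (h \<circ> h ^^ n) (h' ^^ n \<circ> h')"
    using assms by (rule homeomorphism_compose)
  then show ?case by (simp only: funpow.simps(2) funpow_Suc_right[symmetric])
qed

lemma homeomorphism_funpow_diff: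
  assumes "homeomorphism S S h h'" and "w \<in> S" and "m \<le> k"
  shows "(h' ^^ m) ((h ^^ k) w) = (h ^^ (k - m)) w"
proof -
  have "(h ^^ k) w = (h ^^ m) ((h ^^ (k - m)) w)"
    using \<open>m \<le> k\<close> by (metis funpow_add le_add_diff_inverse o_apply)
  moreover have "(h ^^ (k - m)) w \<in> S"
    using homeomorphism_funpow[OF assms(1)] \<open>w \<in> S\<close> unfolding homeomorphism_def by blast
  ultimately show ?thesis
    using homeomorphism_funpow[OF assms(1), of m] by (simp add: homeomorphism_def)
qed

lemma precompact_in_iff: "precompact_in X T \<longleftrightarrow> closure T \<subseteq> X \<and> compact (closure T)"
proof
  assume pc: "precompact_in X T"
  then have "closure T \<subseteq> X \<inter> closure T"
    unfolding precompact_in_def by (meson closure_minimal closure_subset compact_imp_closed le_inf_iff)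
  with pc show "closure T \<subseteq> X \<and> compact (closure T)"
    unfolding precompact_in_def by (simp add: Int_absorb1)
qed (use closure_subset in \<open>auto simp: precompact_in_def Int_absorb1\<close>)

lemma precompact_in_subset:
  assumes "precompact_in X T" and "S \<subseteq> closure T"
  shows "precompact_in X S"
proof -
  have "closure S \<subseteq> closure T"
    using assms(2) by (metis closure_closure closure_mono)
  then show ?thesis
    using assms(1) unfolding precompact_in_iff
    by (metis closed_closure compact_Int_closed inf.absorb_iff2 order_trans)
qed

lemma precompact_in_orbitD: "precompact_in X (orbit h \<xi>) \<Longrightarrow> (h ^^ k) \<xi> \<in> X"
  unfolding precompact_in_def by auto

lemma limit_set_subset: "limit_set S h \<xi> \<subseteq> S"
  by (auto simp: limit_set_def)

lemma limit_set_restrict: "X \<subseteq> M \<Longrightarrow> limit_set X h \<xi> = X \<inter> limit_set M h \<xi>"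
  by (auto simp: limit_set_def)

lemma limit_set_iff:
  "x \<in> limit_set S h \<xi> \<longleftrightarrow>
     x \<in> S \<and> (\<forall>e>0. \<exists>\<^sub>F k in sequentially. dist ((h ^^ k) \<xi>) x < e)"
proof
  assume "x \<in> limit_set S h \<xi>"
  then obtain kk :: "nat \<Rightarrow> nat" where x: "x \<in> S" and kk: "filterlim kk at_top sequentially"
    and lim: "(\<lambda>j. (h ^^ kk j) \<xi>) \<longlonglongrightarrow> x"
    unfolding limit_set_def by blast
  have "\<exists>\<^sub>F k in sequentially. dist ((h ^^ k) \<xi>) x < e" if "e > 0" for e
    unfolding frequently_sequentially
  proof
    fix N
    have "\<forall>\<^sub>F j in sequentially. N \<le> kk j \<and> dist ((h ^^ kk j) \<xi>) x < e"
      using kk lim \<open>e > 0\<close> by (auto simp: filterlim_at_top tendsto_iff intro: eventually_conj)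
    then show "\<exists>k\<ge>N. dist ((h ^^ k) \<xi>) x < e"
      using eventually_happens'[OF sequentially_bot] by blast
  qed
  with x show "x \<in> S \<and> (\<forall>e>0. \<exists>\<^sub>F k in sequentially. dist ((h ^^ k) \<xi>) x < e)"
    by blast
next
  assume x: "x \<in> S \<and> (\<forall>e>0. \<exists>\<^sub>F k in sequentially. dist ((h ^^ k) \<xi>) x < e)"
  then have "\<forall>j. \<exists>k\<ge>j. dist ((h ^^ k) \<xi>) x < inverse (real (Suc j))"
    by (simp add: frequently_sequentially)
  then obtain kk where kk: "\<And>j. kk j \<ge> j" and
    close: "\<And>j. dist ((h ^^ kk j) \<xi>) x < inverse (real (Suc j))"
    by metis
  have "filterlim kk at_top sequentially"
    by (rule filterlim_at_top_mono[OF filterlim_ident always_eventually]) (use kk in blast)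
  moreover have "(\<lambda>j. dist ((h ^^ kk j) \<xi>) x) \<longlonglongrightarrow> 0"
    by (rule tendsto_sandwich[OF _ _ tendsto_const LIMSEQ_inverse_real_of_nat])
      (intro always_eventually allI zero_le_dist less_imp_le[OF close])+
  then have "(\<lambda>j. (h ^^ kk j) \<xi>) \<longlonglongrightarrow> x"
    by (rule tendsto_dist_iff[THEN iffD2])
  ultimately show "x \<in> limit_set S h \<xi>"
    using x unfolding limit_set_def by blast
qed

lemma limit_set_funpow_shift: "limit_set S h ((h ^^ n) \<xi>) = limit_set S h \<xi>"
proof -
  have shift: "(\<exists>\<^sub>F k in sequentially. P (k + n)) \<longleftrightarrow> (\<exists>\<^sub>F k in sequentially. P k)" for P
    by (simp add: frequently_def eventually_sequentially_seg[of "\<lambda>k. \<not> P k"])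
  have "(h ^^ k) ((h ^^ n) \<xi>) = (h ^^ (k + n)) \<xi>" for k
    by (simp add: funpow_add)
  then show ?thesis
    by (simp add: set_eq_iff limit_set_iff shift[of "\<lambda>k. dist ((h ^^ k) \<xi>) x < e" for x e])
qed

lemma limit_set_subset_closure_orbit: "limit_set S h \<xi> \<subseteq> closure (orbit h \<xi>)"
proof
  fix x assume "x \<in> limit_set S h \<xi>"
  then obtain kk :: "nat \<Rightarrow> nat" where "(\<lambda>j. (h ^^ kk j) \<xi>) \<longlonglongrightarrow> x"
    unfolding limit_set_def by blast
  then show "x \<in> closure (orbit h \<xi>)"
    unfolding closure_sequential by (meson funpow_in_orbit)
qed

lemma limit_set_nonempty:
  assumes "precompact_in X (orbit h \<xi>)"
  shows "limit_set X h \<xi> \<noteq> {}"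
proof -
  have cpt: "compact (closure (orbit h \<xi>))" and sub: "closure (orbit h \<xi>) \<subseteq> X"
    using assms by (auto simp: precompact_in_iff)
  have "\<forall>k. (h ^^ k) \<xi> \<in> closure (orbit h \<xi>)"
    using closure_subset by fastforce
  then obtain l r where "l \<in> closure (orbit h \<xi>)" "strict_mono (r :: nat \<Rightarrow> nat)"
    "((\<lambda>k. (h ^^ k) \<xi>) \<circ> r) \<longlonglongrightarrow> l"
    by (rule seq_compactE[OF compact_imp_seq_compact[OF cpt]])
  then have "l \<in> limit_set X h \<xi>"
    unfolding limit_set_def o_def using sub filterlim_subseq by blast
  then show ?thesis
    by blast
qed

lemma funpow_in_limit_set:
  assumes hom: "homeomorphism M M h h'" and "\<xi> \<in> M" and y: "y \<in> limit_set M h \<xi>"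
  shows "(h ^^ m) y \<in> limit_set M h \<xi>" and "(h' ^^ m) y \<in> limit_set M h \<xi>"
proof -
  obtain kk :: "nat \<Rightarrow> nat" where "y \<in> M" and kk: "filterlim kk at_top sequentially"
    and lim: "(\<lambda>j. (h ^^ kk j) \<xi>) \<longlonglongrightarrow> y"
    using y unfolding limit_set_def by blast
  have orbit_M: "\<forall>\<^sub>F j in sequentially. (h ^^ kk j) \<xi> \<in> M"
    using homeomorphism_funpow[OF hom] \<open>\<xi> \<in> M\<close> unfolding homeomorphism_def
    by (blast intro: always_eventually)
  have hom_m: "homeomorphism M M (h ^^ m) (h' ^^ m)"
    using hom by (rule homeomorphism_funpow)
  then have "(h ^^ m) y \<in> M" and "(h' ^^ m) y \<in> M"
    and cont: "continuous_on M (h ^^ m)" "continuous_on M (h' ^^ m)"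
    using \<open>y \<in> M\<close> unfolding homeomorphism_def by blast+
  have "(\<lambda>j. (h ^^ m) ((h ^^ kk j) \<xi>)) \<longlonglongrightarrow> (h ^^ m) y"
    using continuous_on_tendsto_compose[OF cont(1) lim \<open>y \<in> M\<close> orbit_M] .
  moreover have "(h ^^ m) ((h ^^ k) \<xi>) = (h ^^ (k + m)) \<xi>" for k
    by (metis add.commute funpow_add o_apply)
  ultimately have "(\<lambda>j. (h ^^ (kk j + m)) \<xi>) \<longlonglongrightarrow> (h ^^ m) y"
    by simp
  moreover have "filterlim (\<lambda>j. kk j + m) at_top sequentially"
    using filterlim_compose[OF filterlim_add_const_nat_at_top kk] .
  ultimately show "(h ^^ m) y \<in> limit_set M h \<xi>"
    using \<open>(h ^^ m) y \<in> M\<close> unfolding limit_set_def by blast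
  have "\<forall>\<^sub>F j in sequentially. m \<le> kk j"
    using kk by (simp add: filterlim_at_top)
  then have "\<forall>\<^sub>F j in sequentially. (h' ^^ m) ((h ^^ kk j) \<xi>) = (h ^^ (kk j - m)) \<xi>"
    by (rule eventually_mono) (simp add: homeomorphism_funpow_diff[OF hom \<open>\<xi> \<in> M\<close>])
  with continuous_on_tendsto_compose[OF cont(2) lim \<open>y \<in> M\<close> orbit_M]
  have "(\<lambda>j. (h ^^ (kk j - m)) \<xi>) \<longlonglongrightarrow> (h' ^^ m) y"
    by (rule Lim_transform_eventually)
  moreover have "filterlim (\<lambda>j. kk j - m) at_top sequentially"
    using filterlim_compose[OF filterlim_minus_const_nat_at_top kk] .
  ultimately show "(h' ^^ m) y \<in> limit_set M h \<xi>"
    using \<open>(h' ^^ m) y \<in> M\<close> unfolding limit_set_def by blast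
qed

lemma limit_point_orbits_precompact:
  assumes hom: "homeomorphism M M h h'" and "X \<subseteq> M"
    and pc: "precompact_in X (orbit h \<xi>)" and y: "y \<in> limit_set X h \<xi>"
  shows "precompact_in X (orbit h y)" and "precompact_in X (orbit h' y)"
proof -
  have "\<xi> \<in> M" and "y \<in> limit_set M h \<xi>"
    using pc y \<open>X \<subseteq> M\<close> precompact_in_orbitD[of X h \<xi> 0] limit_set_restrict[OF \<open>X \<subseteq> M\<close>]
    by auto
  then have "orbit h y \<subseteq> limit_set M h \<xi>" and "orbit h' y \<subseteq> limit_set M h \<xi>"
    using funpow_in_limit_set[OF hom] unfolding orbit_eq_range by blast+
  then have "orbit h y \<subseteq> closure (orbit h \<xi>)" and "orbit h' y \<subseteq> closure (orbit h \<xi>)"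
    using limit_set_subset_closure_orbit by blast+
  then show "precompact_in X (orbit h y)" and "precompact_in X (orbit h' y)"
    using precompact_in_subset[OF pc] by auto
qed

lemma limit_set_inverse_subset:
  assumes hom: "homeomorphism M M h h'" and "X \<subseteq> M" and "\<xi> \<in> M"
    and y: "y \<in> limit_set X h \<xi>"
  shows "limit_set X h' y \<subseteq> limit_set X h \<xi>"
proof
  fix x assume x: "x \<in> limit_set X h' y"
  then have x_near: "\<exists>\<^sub>F m in sequentially. dist ((h' ^^ m) y) x < e" if "e > 0" for e
    using that unfolding limit_set_iff by blast
  have orbit_near: "\<exists>\<^sub>F k in sequentially. dist ((h ^^ k) \<xi>) ((h' ^^ m) y) < e"
    if "e > 0" for e m
  proof -
    have "y \<in> limit_set M h \<xi>"
      using y \<open>X \<subseteq> M\<close> limit_set_restrict by blast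
    then have "(h' ^^ m) y \<in> limit_set M h \<xi>"
      by (rule funpow_in_limit_set(2)[OF hom \<open>\<xi> \<in> M\<close>])
    then show ?thesis
      using that unfolding limit_set_iff by blast
  qed
  have "\<exists>\<^sub>F k in sequentially. dist ((h ^^ k) \<xi>) x < e" if "e > 0" for e
  proof -
    have "\<exists>\<^sub>F m in sequentially. dist ((h' ^^ m) y) x < e / 2"
      using \<open>e > 0\<close> by (intro x_near) simp
    then have "\<exists>m. dist ((h' ^^ m) y) x < e / 2"
      by (rule frequently_ex)
    then obtain m where m: "dist ((h' ^^ m) y) x < e / 2" ..
    have "\<exists>\<^sub>F k in sequentially. dist ((h ^^ k) \<xi>) ((h' ^^ m) y) < e / 2"
      using \<open>e > 0\<close> by (intro orbit_near) simp
    then show ?thesis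
      by (rule frequently_elim1) (use m in metric)
  qed
  then show "x \<in> limit_set X h \<xi>"
    using x by (simp add: limit_set_iff)
qed

lemma exists_inverse_limit_set_subset:
  assumes "homeomorphism M M h h'" and "X \<subseteq> M" and "precompact_in X (orbit h \<xi>)"
  obtains y where "y \<in> X" and "limit_set X h' y \<subseteq> limit_set X h \<xi>"
proof -
  obtain y where "y \<in> limit_set X h \<xi>"
    using limit_set_nonempty[OF assms(3)] by blast
  moreover have "\<xi> \<in> M"
    using precompact_in_orbitD[OF assms(3), of 0] assms(2) by auto
  ultimately show ?thesis
    using that[of y] limit_set_inverse_subset[OF assms(1,2)] limit_set_subset[of X h \<xi>] by blast
qed

lemma image_limit_set_subset:
  assumes F: "continuous_on X F" "F ` X \<subseteq> Z" and orbit_X: "\<And>k. (h ^^ k) \<xi> \<in> X"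
    and semiconj: "\<And>k. F ((h ^^ k) \<xi>) = (g ^^ k) (F \<xi>)"
  shows "F ` limit_set X h \<xi> \<subseteq> limit_set Z g (F \<xi>)"
proof
  fix z assume "z \<in> F ` limit_set X h \<xi>"
  then obtain x kk where z: "z = F x" and "x \<in> X" and kk: "filterlim kk at_top sequentially"
    and lim: "(\<lambda>j. (h ^^ kk j) \<xi>) \<longlonglongrightarrow> x"
    unfolding limit_set_def by blast
  have "(\<lambda>j. F ((h ^^ kk j) \<xi>)) \<longlonglongrightarrow> F x"
    using continuous_on_tendsto_compose[OF F(1) lim \<open>x \<in> X\<close>] orbit_X by simp
  then show "z \<in> limit_set Z g (F \<xi>)"
    unfolding limit_set_def using z \<open>x \<in> X\<close> F(2) kk by (auto simp: semiconj)
qed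

lemma limit_set_image_subset:
  assumes pc: "precompact_in X (orbit h \<xi>)" and F: "continuous_on X F"
    and semiconj: "\<And>k. F ((h ^^ k) \<xi>) = (g ^^ k) (F \<xi>)"
  shows "limit_set Z g (F \<xi>) \<subseteq> F ` limit_set X h \<xi>"
proof
  fix z assume "z \<in> limit_set Z g (F \<xi>)"
  then obtain kk :: "nat \<Rightarrow> nat" where kk: "filterlim kk at_top sequentially"
    and lim: "(\<lambda>j. (g ^^ kk j) (F \<xi>)) \<longlonglongrightarrow> z"
    unfolding limit_set_def by blast
  have cpt: "compact (closure (orbit h \<xi>))" and sub: "closure (orbit h \<xi>) \<subseteq> X"
    using pc by (auto simp: precompact_in_iff)
  have "\<forall>j. (h ^^ kk j) \<xi> \<in> closure (orbit h \<xi>)"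
    using closure_subset by fastforce
  then obtain l r where "l \<in> closure (orbit h \<xi>)" and r: "strict_mono (r :: nat \<Rightarrow> nat)"
    and "((\<lambda>j. (h ^^ kk j) \<xi>) \<circ> r) \<longlonglongrightarrow> l"
    by (rule seq_compactE[OF compact_imp_seq_compact[OF cpt]])
  then have l: "l \<in> X" and lim_r: "(\<lambda>j. (h ^^ kk (r j)) \<xi>) \<longlonglongrightarrow> l"
    using sub by (auto simp: o_def)
  have l_limit: "l \<in> limit_set X h \<xi>"
    unfolding limit_set_def using l lim_r filterlim_compose[OF kk filterlim_subseq[OF r]] by auto
  have "(\<lambda>j. F ((h ^^ kk (r j)) \<xi>)) \<longlonglongrightarrow> F l"
    using continuous_on_tendsto_compose[OF F lim_r l] precompact_in_orbitD[OF pc] by simp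
  then have "(\<lambda>j. (g ^^ kk (r j)) (F \<xi>)) \<longlonglongrightarrow> F l"
    by (simp add: semiconj)
  moreover have "(\<lambda>j. (g ^^ kk (r j)) (F \<xi>)) \<longlonglongrightarrow> z"
    using LIMSEQ_subseq_LIMSEQ[OF lim r] by (simp add: o_def)
  ultimately have "F l = z"
    by (rule LIMSEQ_unique)
  with l_limit show "z \<in> F ` limit_set X h \<xi>"
    by blast
qed

lemma limit_set_image:
  assumes pc: "precompact_in X (orbit h \<xi>)" and F: "continuous_on X F" "F ` X \<subseteq> Z"
    and semiconj: "\<And>k. F ((h ^^ k) \<xi>) = (g ^^ k) (F \<xi>)"
  shows "limit_set Z g (F \<xi>) = F ` limit_set X h \<xi>"
  using limit_set_image_subset[OF pc F(1) semiconj]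
    image_limit_set_subset[OF F precompact_in_orbitD[OF pc] semiconj] by blast

lemma funpow_semiconj:
  assumes "f ` X \<subseteq> X" and semiconj: "\<And>x. x \<in> X \<Longrightarrow> F (f x) = g (F x)" and "\<xi> \<in> X"
  shows "F ((f ^^ k) \<xi>) = (g ^^ k) (F \<xi>)"
proof -
  have "(f ^^ k) \<xi> \<in> X" for k
    using assms by (induction k) auto
  then show ?thesis
    by (induction k) (simp_all add: semiconj)
qed

lemma semiconj_inverse:
  assumes "homeomorphism M M f fi" and "homeomorphism Z Z g gi" and "X \<subseteq> M" and "F ` X \<subseteq> Z"
    and semiconj: "\<And>x. x \<in> X \<Longrightarrow> F (f x) = g (F x)" and "w \<in> X" and "fi w \<in> X"
  shows "F (fi w) = gi (F w)"
proof -
  have "F w = g (F (fi w))"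
    using semiconj[OF \<open>fi w \<in> X\<close>] assms(1,3,6) by (auto simp: homeomorphism_def)
  then show ?thesis
    using assms(2,4,7) by (auto simp: homeomorphism_def)
qed

lemma closedin_limit_set_fibre:
  assumes "closed_basins Z h" and "continuous_on X F" and "F ` X \<subseteq> Z" and "x \<in> X"
  shows "closedin (top_of_set X) {y \<in> X. limit_set Z h (F y) = limit_set Z h (F x)}"
proof -
  let ?\<Omega> = "limit_set Z h (F x)"
  have "closedin (top_of_set Z) (basin Z h ?\<Omega>)"
    using assms(1,3,4) unfolding closed_basins_def limit_sets_def by blast
  then have "closedin (top_of_set X) (X \<inter> F -` basin Z h ?\<Omega>)"
    using assms(2,3) by (blast intro: continuous_closedin_preimage_gen)
  moreover have "X \<inter> F -` basin Z h ?\<Omega> = {y \<in> X. limit_set Z h (F y) = ?\<Omega>}"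
    using assms(3) by (auto simp: basin_def)
  ultimately show ?thesis
    by simp
qed

lemma closedin_sequentially_limit:
  assumes "closedin (top_of_set X) E" and "\<And>n. s n \<in> E" and "s \<longlonglongrightarrow> l" and "l \<in> X"
  shows "l \<in> E"
  using assms by (metis IntE IntI closed_sequentially closedin_closed)

lemma path_connected_closedin_fibres_countable_constant:
  assumes "path_connected S" and countable: "countable (L ` S)"
    and fibres: "\<And>x. x \<in> S \<Longrightarrow> closedin (top_of_set S) {y \<in> S. L y = L x}"
    and "a \<in> S" and "b \<in> S"
  shows "L a = L b"
proof -
  obtain \<gamma> where \<gamma>: "path \<gamma>" "path_image \<gamma> \<subseteq> S" "pathstart \<gamma> = a" "pathfinish \<gamma> = b"
    using assms unfolding path_connected_def by blast
  define P where "P t = {s \<in> {0..1::real}. L (\<gamma> s) = L (\<gamma> t)}" for t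
  have \<gamma>_S: "\<gamma> \<in> {0..1} \<rightarrow> S"
    using \<gamma>(2) by (auto simp: path_image_def)
  have "closed (P t)" if "t \<in> {0..1}" for t
  proof -
    have "closedin (top_of_set {0..1}) ({0..1} \<inter> \<gamma> -` {y \<in> S. L y = L (\<gamma> t)})"
      using \<gamma>(1) \<gamma>_S fibres that unfolding path_def by (blast intro: continuous_closedin_preimage_gen)
    moreover have "{0..1} \<inter> \<gamma> -` {y \<in> S. L y = L (\<gamma> t)} = P t"
      using \<gamma>_S by (auto simp: P_def)
    ultimately show ?thesis
      using closedin_closed_trans by fastforce
  qed
  moreover have "countable (P ` {0..1})"
  proof -
    have "L ` \<gamma> ` {0..1} \<subseteq> L ` S"
      using \<gamma>_S by auto
    then have "countable ((\<lambda>v. {s \<in> {0..1}. L (\<gamma> s) = v}) ` L ` \<gamma> ` {0..1})"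
      using countable by (blast intro: countable_image countable_subset)
    then show ?thesis
      by (simp add: P_def image_image)
  qed
  moreover have "pairwise disjnt (P ` {0..1})" and "\<Union> (P ` {0..1}) = {0..1}"
    by (fastforce simp: P_def pairwise_def disjnt_def)+
  ultimately have "P ` {0..1} = {{0..1}}"
    by (intro real_Sierpinski_lemma) (auto simp: P_def)
  then have "P 0 = {0..1}"
    by (metis atLeastAtMost_iff image_eqI order_refl singletonD zero_le_one)
  then have "1 \<in> P 0"
    by simp
  then show ?thesis
    using \<gamma>(3,4) by (simp add: P_def pathstart_def pathfinish_def)
qed

locale semiconjugacy =
  fixes M X :: "'a::metric_space set" and f fi :: "'a \<Rightarrow> 'a"
    and Z :: "'z::metric_space set" and g gi :: "'z \<Rightarrow> 'z" and F :: "'a \<Rightarrow> 'z"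
  assumes hom_f: "homeomorphism M M f fi" and hom_g: "homeomorphism Z Z g gi"
    and X_M: "X \<subseteq> M" and f_X: "f ` X \<subseteq> X"
    and F_cont: "continuous_on X F" and F_Z: "F ` X \<subseteq> Z"
    and semiconj: "\<And>x. x \<in> X \<Longrightarrow> F (f x) = g (F x)"
begin

lemma funpow_in_X: "x \<in> X \<Longrightarrow> (f ^^ k) x \<in> X"
  using f_X by (induction k) auto

lemma F_funpow: "x \<in> X \<Longrightarrow> F ((f ^^ k) x) = (g ^^ k) (F x)"
  by (rule funpow_semiconj[where X = X]) (use f_X semiconj in auto)

lemma F_inverse: "w \<in> X \<Longrightarrow> fi w \<in> X \<Longrightarrow> F (fi w) = gi (F w)"
  by (rule semiconj_inverse[OF hom_f hom_g X_M F_Z]) (use semiconj in auto)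

lemma omega_limit_set_image:
  assumes "precompact_in X (orbit f y)"
  shows "limit_set Z g (F y) = F ` limit_set X f y"
  using assms precompact_in_orbitD[OF assms, of 0]
  by (intro limit_set_image F_cont F_Z F_funpow) auto

lemma alpha_limit_set_image:
  assumes pc: "precompact_in X (orbit fi y)"
  shows "limit_set Z gi (F y) = F ` limit_set X fi y"
proof -
  have "orbit fi y \<subseteq> X"
    using pc by (simp add: precompact_in_def)
  then have "F ((fi ^^ k) y) = (gi ^^ k) (F y)" for k
    using image_orbit_subset[of fi y] F_inverse
    by (intro funpow_semiconj[where X = "orbit fi y"]) auto
  then show ?thesis
    using pc by (intro limit_set_image F_cont F_Z)
qed

lemma limit_sets_image_funpow:
  assumes "x \<in> X"
  shows "limit_set Z g (F ((f ^^ k) x)) = limit_set Z g (F x)"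
    and "limit_set Z gi (F ((f ^^ k) x)) = limit_set Z gi (F x)"
proof -
  have Fx: "F ((f ^^ k) x) = (g ^^ k) (F x)"
    using F_funpow[OF assms] .
  then show "limit_set Z g (F ((f ^^ k) x)) = limit_set Z g (F x)"
    by (simp add: limit_set_funpow_shift)
  have "(gi ^^ k) ((g ^^ k) (F x)) = F x"
    using homeomorphism_funpow[OF hom_g] F_Z assms by (simp add: homeomorphism_def image_subset_iff)
  then show "limit_set Z gi (F ((f ^^ k) x)) = limit_set Z gi (F x)"
    using limit_set_funpow_shift[of Z gi k "(g ^^ k) (F x)"] Fx by simp
qed

end

locale closed_basin_embedding = semiconjugacy +
  assumes F_inj: "inj_on F X"
    and closed_basins_g: "closed_basins Z g" and closed_basins_gi: "closed_basins Z gi"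
    and X_path_connected: "path_connected X"
    and countable_limit_sets: "countable (limit_sets X f \<union> limit_sets X fi)"
    and omega_rep: "\<forall>\<Omega>\<in>limit_sets X f. \<exists>\<xi>\<in>basin X f \<Omega>. precompact_in X (orbit f \<xi>)"
    and alpha_rep: "\<forall>\<Gamma>\<in>limit_sets X fi. \<exists>\<xi>\<in>basin X fi \<Gamma>. precompact_in X (orbit fi \<xi>)"
begin

lemma omega_representative:
  assumes "\<Omega> \<in> limit_sets X f"
  obtains \<xi> where "\<xi> \<in> X" "precompact_in X (orbit f \<xi>)" "\<Omega> = limit_set X f \<xi>"
  using omega_rep assms unfolding basin_def by auto

lemma alpha_representative:
  assumes "\<Gamma> \<in> limit_sets X fi"
  obtains \<xi> where "\<xi> \<in> X" "precompact_in X (orbit fi \<xi>)" "\<Gamma> = limit_set X fi \<xi>"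
  using alpha_rep assms unfolding basin_def by auto

lemma bi_precompact_representative:
  assumes "x \<in> X"
  obtains y where "precompact_in X (orbit f y)" "precompact_in X (orbit fi y)"
    "limit_set Z g (F y) = limit_set Z g (F x)" "limit_set Z gi (F y) = limit_set Z gi (F x)"
proof -
  have "limit_set X f x \<in> limit_sets X f"
    using assms by (simp add: limit_sets_def)
  then obtain \<xi> where \<xi>: "precompact_in X (orbit f \<xi>)" "limit_set X f x = limit_set X f \<xi>"
    by (metis omega_representative)
  obtain y where y: "y \<in> limit_set X f \<xi>"
    using limit_set_nonempty[OF \<xi>(1)] by blast
  \<comment> \<open>y is an accumulation point of the trajectory of x, along which the level sets of x are
    invariant; being closed, they contain y.\<close>
  then obtain kk where "y \<in> X" and lim: "(\<lambda>j. (f ^^ kk j) x) \<longlonglongrightarrow> y"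
    using \<xi>(2) unfolding limit_set_def by blast
  have "y \<in> {y \<in> X. limit_set Z h (F y) = limit_set Z h (F x)}"
    if "h = g \<or> h = gi" for h
  proof (rule closedin_sequentially_limit[OF _ _ lim \<open>y \<in> X\<close>])
    show "closedin (top_of_set X) {y \<in> X. limit_set Z h (F y) = limit_set Z h (F x)}"
      using that closedin_limit_set_fibre[OF closed_basins_g F_cont F_Z assms]
        closedin_limit_set_fibre[OF closed_basins_gi F_cont F_Z assms] by blast
    show "(f ^^ kk j) x \<in> {y \<in> X. limit_set Z h (F y) = limit_set Z h (F x)}" for j
      using funpow_in_X limit_sets_image_funpow assms that by auto
  qed
  then have "limit_set Z g (F y) = limit_set Z g (F x)" "limit_set Z gi (F y) = limit_set Z gi (F x)"
    by auto
  then show ?thesis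
    using that limit_point_orbits_precompact[OF hom_f X_M \<xi>(1) y] by blast
qed

lemma omega_limit_set_image_mem:
  assumes "x \<in> X"
  shows "limit_set Z g (F x) \<in> image F ` limit_sets X f"
proof -
  obtain y where y: "precompact_in X (orbit f y)" "limit_set Z g (F y) = limit_set Z g (F x)"
    using bi_precompact_representative[OF assms] by metis
  then have "y \<in> X"
    using precompact_in_orbitD[of X f y 0] by simp
  then show ?thesis
    using y omega_limit_set_image[OF y(1)] by (auto simp: limit_sets_def)
qed

lemma alpha_limit_set_image_mem:
  assumes "x \<in> X"
  shows "limit_set Z gi (F x) \<in> image F ` limit_sets X fi"
proof -
  obtain y where y: "precompact_in X (orbit fi y)" "limit_set Z gi (F y) = limit_set Z gi (F x)"
    using bi_precompact_representative[OF assms] by metis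
  then have "y \<in> X"
    using precompact_in_orbitD[of X fi y 0] by simp
  then show ?thesis
    using y alpha_limit_set_image[OF y(1)] by (auto simp: limit_sets_def)
qed

lemma omega_limit_set_image_const:
  assumes "a \<in> X" and "b \<in> X"
  shows "limit_set Z g (F a) = limit_set Z g (F b)"
proof (rule path_connected_closedin_fibres_countable_constant[OF X_path_connected _ _ assms])
  have "countable (image F ` limit_sets X f)"
    using countable_limit_sets by simp
  then show "countable ((\<lambda>x. limit_set Z g (F x)) ` X)"
    by (rule countable_subset[rotated]) (use omega_limit_set_image_mem in blast)
qed (rule closedin_limit_set_fibre[OF closed_basins_g F_cont F_Z])

lemma alpha_limit_set_image_const:
  assumes "a \<in> X" and "b \<in> X"
  shows "limit_set Z gi (F a) = limit_set Z gi (F b)"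
proof (rule path_connected_closedin_fibres_countable_constant[OF X_path_connected _ _ assms])
  have "countable (image F ` limit_sets X fi)"
    using countable_limit_sets by simp
  then show "countable ((\<lambda>x. limit_set Z gi (F x)) ` X)"
    by (rule countable_subset[rotated]) (use alpha_limit_set_image_mem in blast)
qed (rule closedin_limit_set_fibre[OF closed_basins_gi F_cont F_Z])

lemma omega_limit_sets_eq:
  assumes "\<Omega> \<in> limit_sets X f" and "\<Omega>' \<in> limit_sets X f"
  shows "\<Omega> = \<Omega>'"
proof -
  obtain a b where a: "a \<in> X" "precompact_in X (orbit f a)" "\<Omega> = limit_set X f a"
    and b: "b \<in> X" "precompact_in X (orbit f b)" "\<Omega>' = limit_set X f b"
    using omega_representative assms by metis
  have "F ` \<Omega> = F ` \<Omega>'"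
    using omega_limit_set_image[OF a(2)] omega_limit_set_image[OF b(2)]
      omega_limit_set_image_const[OF a(1) b(1)] a(3) b(3) by simp
  then show ?thesis
    using inj_on_image_eq_iff[OF F_inj] limit_set_subset a(3) b(3) by metis
qed

lemma alpha_limit_sets_eq:
  assumes "\<Gamma> \<in> limit_sets X fi" and "\<Gamma>' \<in> limit_sets X fi"
  shows "\<Gamma> = \<Gamma>'"
proof -
  obtain a b where a: "a \<in> X" "precompact_in X (orbit fi a)" "\<Gamma> = limit_set X fi a"
    and b: "b \<in> X" "precompact_in X (orbit fi b)" "\<Gamma>' = limit_set X fi b"
    using alpha_representative assms by metis
  have "F ` \<Gamma> = F ` \<Gamma>'"
    using alpha_limit_set_image[OF a(2)] alpha_limit_set_image[OF b(2)]
      alpha_limit_set_image_const[OF a(1) b(1)] a(3) b(3) by simp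
  then show ?thesis
    using inj_on_image_eq_iff[OF F_inj] limit_set_subset a(3) b(3) by metis
qed

lemma omega_limit_set_eq_alpha_limit_set:
  assumes "\<Omega> \<in> limit_sets X f" and "\<Gamma> \<in> limit_sets X fi"
  shows "\<Omega> = \<Gamma>"
proof
  obtain a where a: "precompact_in X (orbit f a)" "\<Omega> = limit_set X f a"
    using omega_representative assms(1) by metis
  obtain y where "y \<in> X" "limit_set X fi y \<subseteq> \<Omega>"
    using exists_inverse_limit_set_subset[OF hom_f X_M a(1)] a(2) by metis
  moreover have "limit_set X fi y = \<Gamma>"
    using alpha_limit_sets_eq[OF _ assms(2)] \<open>y \<in> X\<close> by (simp add: limit_sets_def)
  ultimately show "\<Gamma> \<subseteq> \<Omega>"
    by simp
next
  obtain b where b: "precompact_in X (orbit fi b)" "\<Gamma> = limit_set X fi b"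
    using alpha_representative assms(2) by metis
  obtain z where "z \<in> X" "limit_set X f z \<subseteq> \<Gamma>"
    using exists_inverse_limit_set_subset[OF homeomorphism_symD[OF hom_f] X_M b(1)] b(2)
    by metis
  moreover have "limit_set X f z = \<Omega>"
    using omega_limit_sets_eq[OF _ assms(1)] \<open>z \<in> X\<close> by (simp add: limit_sets_def)
  ultimately show "\<Omega> \<subseteq> \<Gamma>"
    by simp
qed

lemma limit_sets_eq:
  assumes "S1 \<in> limit_sets X f \<union> limit_sets X fi" and "S2 \<in> limit_sets X f \<union> limit_sets X fi"
  shows "S1 = S2"
  using assms
  by (elim UnE) (metis omega_limit_sets_eq alpha_limit_sets_eq omega_limit_set_eq_alpha_limit_set)+

end

theorem corollary19:
  fixes M X :: "'a::metric_space set" and f fi :: "'a \<Rightarrow> 'a"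
  assumes sepM: "separable_space (top_of_set M)"
    and homf: "homeomorphism M M f fi"
    and XM: "X \<subseteq> M" and Xinv: "f ` X \<subseteq> X" and Xpc: "path_connected X"
    and precomp: "\<forall>\<xi>\<in>X. precompact_in X (orbit f \<xi>) \<or> precompact_in X (orbit fi \<xi>)"
    and count: "countable (limit_sets X f \<union> limit_sets X fi)"
    and fwd: "\<forall>\<Omega>\<in>limit_sets X f. \<exists>\<xi>\<in>basin X f \<Omega>. precompact_in X (orbit f \<xi>)"
    and bwd: "\<forall>\<Gamma>\<in>limit_sets X fi. \<exists>\<xi>\<in>basin X fi \<Gamma>. precompact_in X (orbit fi \<xi>)"
    and two: "\<exists>S1 S2. S1 \<in> limit_sets X f \<union> limit_sets X fi
                    \<and> S2 \<in> limit_sets X f \<union> limit_sets X fi \<and> S1 \<noteq> S2"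
  shows "\<not> (\<exists>(Z :: 'z::metric_space set) g gi (F :: 'a \<Rightarrow> 'z).
            separable_space (top_of_set Z) \<and> homeomorphism Z Z g gi
            \<and> closed_basins Z g \<and> closed_basins Z gi
            \<and> continuous_on X F \<and> inj_on F X \<and> F ` X \<subseteq> Z
            \<and> (\<forall>x\<in>X. F (f x) = g (F x)))"
proof
  assume "\<exists>(Z :: 'z::metric_space set) g gi (F :: 'a \<Rightarrow> 'z).
            separable_space (top_of_set Z) \<and> homeomorphism Z Z g gi
            \<and> closed_basins Z g \<and> closed_basins Z gi
            \<and> continuous_on X F \<and> inj_on F X \<and> F ` X \<subseteq> Z
            \<and> (\<forall>x\<in>X. F (f x) = g (F x))"
  then obtain Z :: "'z set" and g gi and F :: "'a \<Rightarrow> 'z" where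
    "homeomorphism Z Z g gi" "closed_basins Z g" "closed_basins Z gi"
    "continuous_on X F" "inj_on F X" "F ` X \<subseteq> Z" "\<forall>x\<in>X. F (f x) = g (F x)"
    by blast
  then interpret closed_basin_embedding M X f fi Z g gi F
    using homf XM Xinv Xpc count fwd bwd by unfold_locales auto
  from two show False
    using limit_sets_eq by blast
qed

end
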